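(* Let $x_k>0$ be the reactance of a transmission line $k$, and let $0\le x_{k,V}^{\min}\le x_{k,V}^{\max}$ be the minimum and maximum reactance of a continuously variable series reactor (CVSR) that may be installed on line $k$. Define $b_k=1/x_k$, $$b_{k,V}^{\min}=-\frac{x_{k,V}^{\max}}{x_k(x_k+x_{k,V}^{\max})},\qquad b_{k,V}^{\max}=-\frac{x_{k,V}^{\min}}{x_k(x_k+x_{k,V}^{\min})},$$ let $\theta_k^{\max}>0$, and set $M_k=|b_{k,V}^{\min}\theta_k^{\max}|$. Let $P_k\in\mathbb{R}$, $\theta_k\in\mathbb{R}$ with $|\theta_k|\le\theta_k^{\max}$, and $\delta_k\in\{0,1\}$. Then the following are equivalent: (i) (nonlinear DC power flow with CVSR) there exists $b_k^V$ with $b_{k,V}^{\min}\le b_k^V\le b_{k,V}^{\max}$ such that $P_k=(b_k+\delta_k b_k^V)\theta_k$; (ii) (mixed integer linear reformulation) there exist $w_k,z_k\in\mathbb{R}$ and $y_k\in\{0,1\}$ such that $P_k=b_k\theta_k+w_k$, $-\delta_k\theta_k^{\max}\le z_k\le\delta_k\theta_k^{\max}$, $\theta_k-(1-\delta_k)\theta_k^{\max}\le z_k\le\theta_k+(1-\delta_k)\theta_k^{\max}$, $-M_ky_k+z_kb_{k,V}^{\min}\le w_k\le z_kb_{k,V}^{\max}+M_ky_k$, and $-M_k(1-y_k)+z_kb_{k,V}^{\max}\le w_k\le z_kb_{k,V}^{\min}+M_k(1-y_k)$.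
   Context: In the DC power flow model, a CVSR inserted in series on line $k$ adds a reactance $x_k^V\in[x_{k,V}^{\min},x_{k,V}^{\max}]$, so the line's susceptance becomes $-1/(x_k+x_k^V)=-(b_k+b_k^V)$ with $b_k=1/x_k$ and $b_k^V=-x_k^V/(x_k(x_k+x_k^V))$; the stated $b_{k,V}^{\min},b_{k,V}^{\max}$ are the resulting bounds on $b_k^V$. The binary $\delta_k=1$ means a CVSR is installed on line $k$, $\theta_k$ is the voltage angle difference across line $k$, and $P_k$ is the active power flow on line $k$. *)

theory Defs
  imports Complex_Main
begin

definition line_b :: "real \<Rightarrow> real" where
  "line_b x = 1 / x"

definition cvsr_bmin :: "real \<Rightarrow> real \<Rightarrow> real" where
  "cvsr_bmin x xVmax = - (xVmax / (x * (x + xVmax)))"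

definition cvsr_bmax :: "real \<Rightarrow> real \<Rightarrow> real" where
  "cvsr_bmax x xVmin = - (xVmin / (x * (x + xVmin)))"

definition bigM :: "real \<Rightarrow> real \<Rightarrow> real \<Rightarrow> real" where
  "bigM x xVmax thmax = \<bar>cvsr_bmin x xVmax * thmax\<bar>"

end

theory Submission
  imports Defs
begin

text \<open>The CVSR changes the line susceptance from 1/x to 1/(x + x^V), so b^V = 1/(x + x^V) - 1/x
  lies in [b_min, b_max], an interval of nonpositive reals. The bilinear term w = b^V z with
  z = delta theta is then linearized exactly: w = b^V z for some b^V in [b_min, b_max] means that
  w lies between z b_min and z b_max, the binary y selects which of the two is the lower end, and
  M bounds |z| (b_max - b_min) because b_max \<le> 0 and |z| \<le> theta_max, so the constraints of the
  deselected ordering are slack. Finally, the constraints on z force z = delta theta.\<close>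

lemma cvsr_bmin_eq_cvsr_bmax: "cvsr_bmin = cvsr_bmax"
  by (simp add: fun_eq_iff cvsr_bmin_def cvsr_bmax_def)

lemma cvsr_bmax_eq_diff:
  assumes "x > 0" "xV \<ge> 0"
  shows "cvsr_bmax x xV = 1 / (x + xV) - 1 / x"
  using assms by (simp add: cvsr_bmax_def field_simps)

lemma cvsr_bmax_antimono:
  assumes "x > 0" "0 \<le> s" "s \<le> t"
  shows "cvsr_bmax x t \<le> cvsr_bmax x s"
  using assms by (simp add: cvsr_bmax_eq_diff frac_le)

lemma cvsr_bmax_nonpos:
  assumes "x > 0" "xV \<ge> 0"
  shows "cvsr_bmax x xV \<le> 0"
  using cvsr_bmax_antimono[of x 0 xV] assms by (simp add: cvsr_bmax_def)

lemma bigM_eq: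
  assumes "x > 0" "xVmax \<ge> 0" "thmax \<ge> 0"
  shows "bigM x xVmax thmax = - cvsr_bmin x xVmax * thmax"
  using assms cvsr_bmax_nonpos[of x xVmax]
  by (simp add: bigM_def cvsr_bmin_eq_cvsr_bmax abs_mult abs_of_nonpos)

lemma mult_interval_iff:
  fixes a c z w :: "'a :: linordered_field"
  assumes "a \<le> c"
  shows "(\<exists>b. a \<le> b \<and> b \<le> c \<and> w = b * z) \<longleftrightarrow>
         (z * a \<le> w \<and> w \<le> z * c) \<or> (z * c \<le> w \<and> w \<le> z * a)"
proof
  assume "\<exists>b. a \<le> b \<and> b \<le> c \<and> w = b * z"
  then obtain b where "a \<le> b" "b \<le> c" "w = b * z" by blast
  then show "(z * a \<le> w \<and> w \<le> z * c) \<or> (z * c \<le> w \<and> w \<le> z * a)"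
    by (cases "z \<ge> 0") (auto simp: mult.commute intro: mult_right_mono mult_right_mono_neg)
next
  assume between: "(z * a \<le> w \<and> w \<le> z * c) \<or> (z * c \<le> w \<and> w \<le> z * a)"
  show "\<exists>b. a \<le> b \<and> b \<le> c \<and> w = b * z"
  proof (cases "z = 0")
    case True
    then show ?thesis using between assms by auto
  next
    case False
    \<comment> \<open>for the sign of z, the bound in the wrong order can only hold when a z = c z\<close>
    have "a \<le> w / z \<and> w / z \<le> c"
    proof (cases "z > 0")
      case True
      then have "z * a \<le> z * c" using assms by (simp add: mult_left_mono)
      then have "z * a \<le> w \<and> w \<le> z * c" using between by auto
      with True show ?thesis by (simp add: pos_le_divide_eq pos_divide_le_eq mult.commute)
    next
      case False
      then have "z < 0" using \<open>z \<noteq> 0\<close> by simp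
      then have "z * c \<le> z * a" using assms by (simp add: mult_left_mono_neg)
      then have "z * c \<le> w \<and> w \<le> z * a" using between by auto
      with \<open>z < 0\<close> show ?thesis by (simp add: neg_le_divide_eq neg_divide_le_eq mult.commute)
    qed
    with False show ?thesis by (intro exI[of _ "w / z"]) auto
  qed
qed

lemma between_iff_big_M:
  fixes a c z w M :: "'a :: linordered_idom"
  assumes "\<bar>z * (c - a)\<bar> \<le> M"
  shows "(z * a \<le> w \<and> w \<le> z * c) \<or> (z * c \<le> w \<and> w \<le> z * a) \<longleftrightarrow>
    (\<exists>y. (y = 0 \<or> y = 1)
        \<and> - M * y + z * a \<le> w \<and> w \<le> z * c + M * y
        \<and> - M * (1 - y) + z * c \<le> w \<and> w \<le> z * a + M * (1 - y))"
proof -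
  have "z * c - z * a \<le> M" "z * a - z * c \<le> M"
    using assms abs_le_D1[OF assms] abs_le_D2[OF assms] by (simp_all add: algebra_simps)
  then show ?thesis
    by (auto simp: algebra_simps intro: exI[of _ 0] exI[of _ 1])
qed

lemma switched_angle_iff:
  fixes theta thmax delta z :: real
  assumes "\<bar>theta\<bar> \<le> thmax" "delta = 0 \<or> delta = 1"
  shows "(- delta * thmax \<le> z \<and> z \<le> delta * thmax
          \<and> theta - (1 - delta) * thmax \<le> z \<and> z \<le> theta + (1 - delta) * thmax \<and> R)
         \<longleftrightarrow> z = delta * theta \<and> R"
  using assms by auto

theorem mainTheorem1:
  fixes x xVmin xVmax thmax P theta delta :: real
  assumes "x > 0"
    and "0 \<le> xVmin" and "xVmin \<le> xVmax"
    and "thmax > 0"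
    and "\<bar>theta\<bar> \<le> thmax"
    and "delta = 0 \<or> delta = 1"
  shows "(\<exists>bV. cvsr_bmin x xVmax \<le> bV \<and> bV \<le> cvsr_bmax x xVmin
              \<and> P = (line_b x + delta * bV) * theta)
     \<longleftrightarrow>
     (\<exists>w z y :: real. (y = 0 \<or> y = 1)
        \<and> P = line_b x * theta + w
        \<and> - delta * thmax \<le> z \<and> z \<le> delta * thmax
        \<and> theta - (1 - delta) * thmax \<le> z \<and> z \<le> theta + (1 - delta) * thmax
        \<and> - bigM x xVmax thmax * y + z * cvsr_bmin x xVmax \<le> w
        \<and> w \<le> z * cvsr_bmax x xVmin + bigM x xVmax thmax * y
        \<and> - bigM x xVmax thmax * (1 - y) + z * cvsr_bmax x xVmin \<le> w
        \<and> w \<le> z * cvsr_bmin x xVmax + bigM x xVmax thmax * (1 - y))"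
    (is "?nonlinear \<longleftrightarrow> ?milp")
proof -
  define a where "a = cvsr_bmin x xVmax"
  define c where "c = cvsr_bmax x xVmin"
  define M where "M = bigM x xVmax thmax"
  have "a \<le> c" "c \<le> 0"
    using assms cvsr_bmax_antimono cvsr_bmax_nonpos unfolding a_def c_def cvsr_bmin_eq_cvsr_bmax
    by auto
  have "\<bar>delta * theta * (c - a)\<bar> \<le> thmax * (c - a)"
    using assms \<open>a \<le> c\<close> by (auto simp: abs_mult intro: mult_right_mono)
  also have "\<dots> \<le> M"
    using assms \<open>c \<le> 0\<close> bigM_eq[of x xVmax thmax]
    by (simp add: M_def a_def algebra_simps mult_nonpos_nonneg)
  finally have slack: "\<bar>delta * theta * (c - a)\<bar> \<le> M" .
  have "?nonlinear \<longleftrightarrow>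
      (\<exists>bV. a \<le> bV \<and> bV \<le> c \<and> P - line_b x * theta = bV * (delta * theta))"
    by (simp add: a_def c_def algebra_simps)
  also have "\<dots> \<longleftrightarrow> (\<exists>y. (y = 0 \<or> y = 1)
        \<and> - M * y + delta * theta * a \<le> P - line_b x * theta
        \<and> P - line_b x * theta \<le> delta * theta * c + M * y
        \<and> - M * (1 - y) + delta * theta * c \<le> P - line_b x * theta
        \<and> P - line_b x * theta \<le> delta * theta * a + M * (1 - y))"
    by (simp only: mult_interval_iff[OF \<open>a \<le> c\<close>] between_iff_big_M[OF slack])
  also have "\<dots> \<longleftrightarrow> (\<exists>w y. (y = 0 \<or> y = 1) \<and> P = line_b x * theta + w
        \<and> - M * y + delta * theta * a \<le> w \<and> w \<le> delta * theta * c + M * y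
        \<and> - M * (1 - y) + delta * theta * c \<le> w \<and> w \<le> delta * theta * a + M * (1 - y))"
    by (subst ex_comm) (simp add: add.commute[of "line_b x * theta"] flip: diff_eq_eq)
  also have "\<dots> \<longleftrightarrow> ?milp"
    unfolding switched_angle_iff[OF assms(5,6)] a_def c_def M_def by auto
  finally show ?thesis .
qed

end
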